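(* Let $\mathcal D$ be a $k$-oriented Spherical Diagram and $H$ an attractor hull of $\mathcal D$. If an arc of $\mathcal D$ intersects the boundary of $H$ at a point $x$, then there is an arc of $\mathcal D$ that crosses the boundary of $H$ at a point $y$ such that $x$ and $y$ are $H$-connected with respect to $\mathcal D$ and lie on a common edge of $H$. Moreover, if $x\neq y$, then $y$ is not a vertex of $H$.
   Context: A geodesic arc on the unit sphere in $\mathbb R^3$ is the unique shortest curve joining two non-antipodal points. An arc $a$ blocks an arc $b$ (equivalently, $b$ hits $a$) if an endpoint of $b$ lies in the relative interior of $a$. A Spherical Diagram (SD) is a finite non-empty collection $\mathcal D$ of pairwise interior-disjoint geodesic arcs on the unit sphere such that each arc of $\mathcal D$ is blocked by arcs of $\mathcal D$ at each of its endpoints. An SD $\mathcal D$ is $k$-oriented if there exist a set $P$ of $k$ points on the unit sphere (poles), no two antipodal, and a function $f\colon\mathcal D\to P$ such that each arc $a\in\mathcal D$ lies on a great circle through $f(a)$ but contains neither $f(a)$ nor its antipode $-f(a)$ (the anti-pole of $f(a)$). An attractor of a $k$-oriented SD is a set of $k$ points, no two antipodal, chosen among its poles and anti-poles. An attractor hull is the spherical convex hull of an attractor (the whole sphere if the attractor is not contained in any open hemisphere). "Intersect" means "have non-empty intersection". An arc $a$ crosses a curve $\gamma$ if $a\cap\gamma$ contains an isolated point $x$ in the relative interior of $a$ such that every neighborhood of $x$ contains points of $\gamma$ on both sides of $a$. For a region $R$ of the sphere, two points $x,y$ are $R$-connected (with respect to $\mathcal D$) if there is a path from $x$ to $y$ contained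 in the union of the arcs of $\mathcal D$ and in $R$. *)

theory Defs
  imports "HOL-Analysis.Analysis"
begin

type_synonym pt = "real^3"

definition arc_ends :: "pt \<Rightarrow> pt \<Rightarrow> bool" where
  "arc_ends p q \<longleftrightarrow> norm p = 1 \<and> norm q = 1 \<and> p \<noteq> q \<and> p \<noteq> - q"

text \<open>The (minor) geodesic arc joining p and q, as a point set.\<close>
definition garc :: "pt \<Rightarrow> pt \<Rightarrow> pt set" where
  "garc p q = {x. norm x = 1 \<and> (\<exists>a b. 0 \<le> a \<and> 0 \<le> b \<and> x = a *\<^sub>R p + b *\<^sub>R q)}"

definition is_arc :: "pt set \<Rightarrow> bool" where
  "is_arc A \<longleftrightarrow> (\<exists>p q. arc_ends p q \<and> A = garc p q)"

definition arc_endpoint :: "pt set \<Rightarrow> pt \<Rightarrow> bool" where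
  "arc_endpoint A x \<longleftrightarrow> (\<exists>p q. arc_ends p q \<and> A = garc p q \<and> (x = p \<or> x = q))"

definition arc_interior :: "pt set \<Rightarrow> pt set" where
  "arc_interior A = A - {x. arc_endpoint A x}"

definition spherical_diagram :: "pt set set \<Rightarrow> bool" where
  "spherical_diagram D \<longleftrightarrow> finite D \<and> D \<noteq> {} \<and> (\<forall>A\<in>D. is_arc A)
    \<and> (\<forall>A\<in>D. \<forall>B\<in>D. A \<noteq> B \<longrightarrow> arc_interior A \<inter> arc_interior B = {})
    \<and> (\<forall>A\<in>D. \<forall>x. arc_endpoint A x \<longrightarrow> (\<exists>B\<in>D. x \<in> arc_interior B))"

text \<open>P and f witness that D is k-oriented (P = set of poles).\<close>
definition k_orientation :: "pt set set \<Rightarrow> nat \<Rightarrow> pt set \<Rightarrow> (pt set \<Rightarrow> pt) \<Rightarrow> bool" where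
  "k_orientation D k P f \<longleftrightarrow> finite P \<and> card P = k \<and> P \<subseteq> sphere 0 1
    \<and> (\<forall>p\<in>P. - p \<notin> P)
    \<and> (\<forall>A\<in>D. f A \<in> P
          \<and> (\<exists>n. n \<noteq> 0 \<and> n \<bullet> f A = 0 \<and> (\<forall>x\<in>A. n \<bullet> x = 0))
          \<and> f A \<notin> A \<and> - f A \<notin> A)"

definition k_oriented :: "pt set set \<Rightarrow> nat \<Rightarrow> bool" where
  "k_oriented D k \<longleftrightarrow> (\<exists>P f. k_orientation D k P f)"

definition attractor :: "pt set \<Rightarrow> pt set \<Rightarrow> bool" where
  "attractor P Att \<longleftrightarrow> finite Att \<and> Att \<subseteq> P \<union> uminus ` P \<and> card Att = card P
    \<and> (\<forall>a\<in>Att. - a \<notin> Att)"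

definition in_open_hemisphere :: "pt set \<Rightarrow> bool" where
  "in_open_hemisphere S \<longleftrightarrow> (\<exists>n. \<forall>a\<in>S. n \<bullet> a > 0)"

definition spherical_hull :: "pt set \<Rightarrow> pt set" where
  "spherical_hull S = sphere 0 1 \<inter> conic hull (convex hull S)"

definition attractor_hull :: "pt set \<Rightarrow> pt set" where
  "attractor_hull Att = (if in_open_hemisphere Att then spherical_hull Att else sphere 0 1)"

definition sph_boundary :: "pt set \<Rightarrow> pt set" where
  "sph_boundary R = (top_of_set (sphere 0 1)) frontier_of R"

text \<open>Edges and vertices of a spherical convex region H: traces on the sphere of the
  2-dimensional, resp. 1-dimensional, faces of the convex cone spanned by H.\<close>
definition sph_edge :: "pt set \<Rightarrow> pt set \<Rightarrow> bool" where
  "sph_edge H E \<longleftrightarrow> (\<exists>F. F face_of (conic hull H) \<and> aff_dim F = 2 \<and> E = F \<inter> sphere 0 1)"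

definition sph_vertex :: "pt set \<Rightarrow> pt \<Rightarrow> bool" where
  "sph_vertex H v \<longleftrightarrow> norm v = 1 \<and> (conic hull {v}) face_of (conic hull H)"

definition crosses_at :: "pt set \<Rightarrow> pt set \<Rightarrow> pt \<Rightarrow> bool" where
  "crosses_at A \<gamma> x \<longleftrightarrow> x \<in> arc_interior A \<and> x \<in> \<gamma>
    \<and> (\<exists>e>0. \<forall>z\<in>A \<inter> \<gamma>. dist z x < e \<longrightarrow> z = x)
    \<and> (\<exists>n. n \<noteq> 0 \<and> (\<forall>z\<in>A. n \<bullet> z = 0)
         \<and> (\<forall>e>0. (\<exists>z\<in>\<gamma>. dist z x < e \<and> n \<bullet> z > 0) \<and> (\<exists>z\<in>\<gamma>. dist z x < e \<and> n \<bullet> z < 0)))"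

definition R_connected :: "pt set set \<Rightarrow> pt set \<Rightarrow> pt \<Rightarrow> pt \<Rightarrow> bool" where
  "R_connected D R x y \<longleftrightarrow> (\<exists>g. path g \<and> path_image g \<subseteq> (\<Union>D) \<inter> R
      \<and> pathstart g = x \<and> pathfinish g = y)"

end

(*
  Let C be the convex cone spanned by the attractor. The attractor hull H is the trace of C on
  the sphere (if the attractor lies in no open hemisphere, H is the whole sphere and has empty
  boundary), and the edges and vertices of H are the traces of the 2- and 1-dimensional faces
  of C. Every arc of the diagram has its pole or its anti-pole b in C; b lies on the great
  circle of the arc but not on the arc.

  After moving x into the relative interior of an arc pq (through the arc blocking x if x is an
  end) and orienting the arc, its end q lies strictly between x and b on the great circle. If
  the plane of the arc has points of C on both sides, the arc enters the interior of C right
  after x and crosses the boundary of H at x itself. Otherwise the plane supports C in a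
  2-dimensional face containing x, q and b; the arc runs inside H from x to q, q is no vertex
  since it lies strictly between x and b, and the arc blocking q leaves that plane towards the
  interior of C, so it crosses the boundary of H at q.
*)

theory Submission
  imports Defs
begin

unbundle cross3_syntax

section \<open>Triple products and unit vectors\<close>

definition det3 :: "pt \<Rightarrow> pt \<Rightarrow> pt \<Rightarrow> real" where
  "det3 u v w = (u \<times> v) \<bullet> w"

lemma det3_cramer:
  "det3 u v w *\<^sub>R z = det3 z v w *\<^sub>R u + det3 u z w *\<^sub>R v + det3 u v z *\<^sub>R w"
  unfolding det3_def by (simp add: cross3_simps forall_3)

lemma det3_cramer_dual:
  "det3 u v z *\<^sub>R n = (u \<bullet> n) *\<^sub>R (v \<times> z) + (v \<bullet> n) *\<^sub>R (z \<times> u) + (z \<bullet> n) *\<^sub>R (u \<times> v)"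
  unfolding det3_def by (simp add: cross3_simps forall_3)

lemma det3_linear:
  "det3 (u + u') v w = det3 u v w + det3 u' v w"
  "det3 u (v + v') w = det3 u v w + det3 u v' w"
  "det3 u v (w + w') = det3 u v w + det3 u v w'"
  "det3 (c *\<^sub>R u) v w = c * det3 u v w"
  "det3 u (c *\<^sub>R v) w = c * det3 u v w"
  "det3 u v (c *\<^sub>R w) = c * det3 u v w"
  "det3 (u - u') v w = det3 u v w - det3 u' v w"
  "det3 u (v - v') w = det3 u v w - det3 u v' w"
  "det3 u v (w - w') = det3 u v w - det3 u v w'"
  "det3 (- u) v w = - det3 u v w"
  "det3 u (- v) w = - det3 u v w"
  "det3 u v (- w) = - det3 u v w"
  unfolding det3_def
  by (simp_all add: cross_add_left cross_add_right cross_mult_left cross_mult_right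
      inner_add_left inner_add_right inner_diff_left inner_diff_right
      Cross3.left_diff_distrib Cross3.right_diff_distrib)

lemma det3_self: "det3 u u w = 0" "det3 u v u = 0" "det3 u v v = 0"
  unfolding det3_def by (simp_all add: dot_cross_self)

lemma det3_swap: "det3 v u w = - det3 u v w"
  unfolding det3_def by (simp add: cross3_simps)

lemma det3_eq_0_if_orthogonal:
  assumes "n \<noteq> 0" "u \<bullet> n = 0" "v \<bullet> n = 0" "z \<bullet> n = 0"
  shows "det3 u v z = 0"
  using det3_cramer_dual[of u v z n] assms by auto

lemma orthogonal_if_det3_neq_0:
  assumes "det3 u v w \<noteq> 0" "m \<bullet> u = 0" "m \<bullet> v = 0" "m \<bullet> w = 0"
  shows "m = 0"
  using det3_cramer_dual[of u v w m] assms by (simp add: inner_commute)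

text \<open>Cramer's rule in a plane: \<open>w\<close> is any vector off the plane spanned by \<open>u\<close> and \<open>v\<close>.\<close>
lemma coplanar_decomp:
  assumes "det3 u v z = 0" "det3 u v w \<noteq> 0"
  shows "z = (det3 z v w / det3 u v w) *\<^sub>R u + (det3 u z w / det3 u v w) *\<^sub>R v"
proof -
  have "det3 u v w *\<^sub>R z = det3 z v w *\<^sub>R u + det3 u z w *\<^sub>R v"
    using det3_cramer[of u v w z] assms(1) by simp
  then have "z = inverse (det3 u v w) *\<^sub>R (det3 z v w *\<^sub>R u + det3 u z w *\<^sub>R v)"
    using assms(2) by (metis inverse_nonzero_iff_nonzero scaleR_scaleR left_inverse scaleR_one)
  then show ?thesis by (simp add: scaleR_add_right divide_inverse mult.commute)
qed

lemma orthogonal_eq_multiple_cross: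
  assumes "u \<times> v \<noteq> 0" "m \<bullet> u = 0" "m \<bullet> v = 0"
  obtains c where "m = c *\<^sub>R (u \<times> v)"
proof
  have "det3 u v (u \<times> v) = (norm (u \<times> v))\<^sup>2"
    unfolding det3_def by (simp add: power2_norm_eq_inner)
  moreover have "det3 m v (u \<times> v) = 0" "det3 u m (u \<times> v) = 0"
    unfolding det3_def using assms by (simp_all add: dot_cross inner_commute)
  ultimately have "(norm (u \<times> v))\<^sup>2 *\<^sub>R m = det3 u v m *\<^sub>R (u \<times> v)"
    using det3_cramer[of u v "u \<times> v" m] by simp
  moreover have "(norm (u \<times> v))\<^sup>2 \<noteq> 0" using assms by simp
  ultimately have "m = inverse ((norm (u \<times> v))\<^sup>2) *\<^sub>R (det3 u v m *\<^sub>R (u \<times> v))"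
    by (metis scaleR_scaleR left_inverse scaleR_one)
  then show "m = (det3 u v m / (norm (u \<times> v))\<^sup>2) *\<^sub>R (u \<times> v)"
    by (simp add: divide_inverse mult.commute)
qed

lemma det3_neq_0_if_normal:
  assumes "n \<noteq> 0" "n \<bullet> u = 0" "n \<bullet> v = 0" "u \<times> v \<noteq> 0"
  shows "det3 u v n \<noteq> 0"
proof -
  obtain c where "n = c *\<^sub>R (u \<times> v)"
    using orthogonal_eq_multiple_cross[OF assms(4) assms(2,3)] .
  with assms show ?thesis by (simp add: det3_def)
qed

lemma cross_neq_0_if_unit:
  assumes "norm p = 1" "norm q = 1" "p \<noteq> q" "p \<noteq> - q"
  shows "p \<times> q \<noteq> 0"
proof
  assume "p \<times> q = 0"
  then have "collinear {0, p, q}" by (simp add: cross_eq_0)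
  then obtain c where c: "q = c *\<^sub>R p"
    using assms collinear_lemma[of p q] by fastforce
  then have "\<bar>c\<bar> = 1" using assms by simp
  then have "c = 1 \<or> c = -1" by auto
  then show False using c assms by auto
qed

lemma unit_nonneg_multiple_eq:
  assumes "norm z = 1" "norm u = 1" "z = c *\<^sub>R u" "c \<ge> 0"
  shows "z = u"
  using assms by simp

lemma norm_sgn_diff_le:
  assumes "norm y = 1" "w \<noteq> 0"
  shows "norm (sgn w - y) \<le> 2 * norm (w - y)"
proof -
  have "sgn w - w = (1 - norm w) *\<^sub>R sgn w"
    using assms by (simp add: sgn_div_norm algebra_simps divide_inverse)
  then have "norm (sgn w - w) = \<bar>1 - norm w\<bar>" using assms by (simp add: norm_sgn)
  also have "\<dots> \<le> norm (w - y)"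
    using assms norm_triangle_ineq3[of y w] by (simp add: norm_minus_commute)
  finally show ?thesis
    using norm_triangle_ineq[of "sgn w - w" "w - y"] by simp
qed

section \<open>Geodesic arcs and spherical diagrams\<close>

lemma garc_commute: "garc p q = garc q p"
  unfolding garc_def by (auto; metis add.commute)

lemma arc_ends_commute: "arc_ends p q \<Longrightarrow> arc_ends q p"
  unfolding arc_ends_def by (auto simp: minus_equation_iff)

lemma ends_mem_garc:
  assumes "arc_ends p q"
  shows "p \<in> garc p q" "q \<in> garc p q"
proof -
  have "p = 1 *\<^sub>R p + 0 *\<^sub>R q" "q = 0 *\<^sub>R p + 1 *\<^sub>R q" "(0::real) \<le> 0" "(0::real) \<le> 1"
    by simp_all
  with assms show "p \<in> garc p q" "q \<in> garc p q"
    unfolding garc_def arc_ends_def by blast+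
qed

lemma arc_ends_cross_neq_0: "arc_ends p q \<Longrightarrow> p \<times> q \<noteq> 0"
  unfolding arc_ends_def using cross_neq_0_if_unit by blast

lemma arc_ends_det3_pos: "arc_ends p q \<Longrightarrow> det3 p q (p \<times> q) > 0"
  using arc_ends_cross_neq_0[of p q] unfolding det3_def by simp

lemma cross_orthogonal: "(p \<times> q) \<bullet> p = 0" "(p \<times> q) \<bullet> q = 0"
  by (simp_all add: dot_cross_self inner_commute)

lemma garc_plane_decomp:
  assumes "arc_ends p q" "(p \<times> q) \<bullet> z = 0"
  shows "z = (det3 z q (p \<times> q) / det3 p q (p \<times> q)) *\<^sub>R p + (det3 p z (p \<times> q) / det3 p q (p \<times> q)) *\<^sub>R q"
  by (rule coplanar_decomp, rule det3_eq_0_if_orthogonal[of "p \<times> q"])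
    (use assms arc_ends_det3_pos[OF assms(1)] arc_ends_cross_neq_0[OF assms(1)]
      in \<open>auto simp: dot_cross_self inner_commute\<close>)

lemma mem_garc_iff:
  assumes "arc_ends p q"
  shows "z \<in> garc p q \<longleftrightarrow>
    norm z = 1 \<and> (p \<times> q) \<bullet> z = 0 \<and> det3 p z (p \<times> q) \<ge> 0 \<and> det3 z q (p \<times> q) \<ge> 0"
    (is "_ \<longleftrightarrow> _ \<and> ?N \<bullet> z = 0 \<and> _")
proof
  have pos: "det3 p q ?N > 0" using arc_ends_det3_pos[OF assms] .
  show "z \<in> garc p q \<Longrightarrow> norm z = 1 \<and> ?N \<bullet> z = 0 \<and> det3 p z ?N \<ge> 0 \<and> det3 z q ?N \<ge> 0"
    using pos unfolding garc_def
    by (auto simp: det3_linear det3_self inner_add_right cross_orthogonal)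
  assume z: "norm z = 1 \<and> ?N \<bullet> z = 0 \<and> det3 p z ?N \<ge> 0 \<and> det3 z q ?N \<ge> 0"
  then have "det3 z q ?N / det3 p q ?N \<ge> 0" "det3 p z ?N / det3 p q ?N \<ge> 0"
    using pos by simp_all
  with z garc_plane_decomp[OF assms, of z] show "z \<in> garc p q"
    unfolding garc_def by blast
qed

lemma garc_eq_end_if_det3_eq_0:
  assumes "arc_ends p q" "z \<in> garc p q"
  shows "det3 p z (p \<times> q) = 0 \<Longrightarrow> z = p" "det3 z q (p \<times> q) = 0 \<Longrightarrow> z = q"
proof -
  have z: "norm z = 1" "(p \<times> q) \<bullet> z = 0" "det3 p z (p \<times> q) \<ge> 0" "det3 z q (p \<times> q) \<ge> 0"
    using assms mem_garc_iff by auto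
  have pos: "det3 p q (p \<times> q) > 0" using arc_ends_det3_pos[OF assms(1)] .
  note decomp = garc_plane_decomp[OF assms(1) z(2)]
  show "z = p" if "det3 p z (p \<times> q) = 0"
  proof (rule unit_nonneg_multiple_eq)
    show "z = (det3 z q (p \<times> q) / det3 p q (p \<times> q)) *\<^sub>R p" using decomp that by simp
  qed (use z pos assms(1) in \<open>auto simp: arc_ends_def\<close>)
  show "z = q" if "det3 z q (p \<times> q) = 0"
  proof (rule unit_nonneg_multiple_eq)
    show "z = (det3 p z (p \<times> q) / det3 p q (p \<times> q)) *\<^sub>R q" using decomp that by simp
  qed (use z pos assms(1) in \<open>auto simp: arc_ends_def\<close>)
qed

lemma garc_eq_imp_end:
  assumes "arc_ends p q" "arc_ends p' q'" "garc p q = garc p' q'"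
  shows "p = p' \<or> p = q'"
proof (rule ccontr)
  assume ne: "\<not> (p = p' \<or> p = q')"
  have "p \<in> garc p' q'" using assms ends_mem_garc by blast
  then obtain a b where ab: "0 \<le> a" "0 \<le> b" "p = a *\<^sub>R p' + b *\<^sub>R q'"
    unfolding garc_def by auto
  have unit: "norm p = 1" "norm p' = 1" "norm q' = 1"
    using assms(1,2) unfolding arc_ends_def by auto
  have "a \<noteq> 0"
    using ab ne unit_nonneg_multiple_eq[OF unit(1,3), of b] by auto
  moreover have "b \<noteq> 0"
    using ab ne unit_nonneg_multiple_eq[OF unit(1,2), of a] by auto
  ultimately have pos: "a > 0" "b > 0" using ab by auto
  have m: "p' \<in> garc p q" "q' \<in> garc p q"
    using assms ends_mem_garc by blast+
  then have "a * det3 p p' (p \<times> q) \<ge> 0" "b * det3 p q' (p \<times> q) \<ge> 0"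
    using mem_garc_iff[OF assms(1)] pos by auto
  moreover have "a * det3 p p' (p \<times> q) + b * det3 p q' (p \<times> q) = 0"
    using det3_self(1)[of p "p \<times> q"] by (subst (asm) (2) ab(3)) (simp add: det3_linear)
  ultimately have "det3 p p' (p \<times> q) = 0" "det3 p q' (p \<times> q) = 0"
    using pos by (simp_all add: add_nonneg_eq_0_iff)
  then have "p' = p" "q' = p" using garc_eq_end_if_det3_eq_0[OF assms(1)] m by auto
  then show False using assms(2) unfolding arc_ends_def by simp
qed

lemma garc_eq_imp_ends_eq:
  assumes "arc_ends p q" "arc_ends p' q'" "garc p q = garc p' q'"
  shows "{p, q} = {p', q'}"
proof -
  have "p = p' \<or> p = q'" "p' = p \<or> p' = q"
    using garc_eq_imp_end[OF assms] garc_eq_imp_end[OF assms(2,1)] assms(3) by simp_all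
  moreover have "q = p' \<or> q = q'" "q' = p \<or> q' = q"
    using garc_eq_imp_end[OF arc_ends_commute[OF assms(1)] assms(2)]
      garc_eq_imp_end[OF arc_ends_commute[OF assms(2)] assms(1)] assms(3)
    by (simp_all add: garc_commute)
  ultimately show ?thesis by auto
qed

lemma arc_endpoint_garc_iff:
  assumes "arc_ends p q"
  shows "arc_endpoint (garc p q) x \<longleftrightarrow> x = p \<or> x = q"
  unfolding arc_endpoint_def using garc_eq_imp_ends_eq[OF assms] assms by blast

lemma arc_interior_garc:
  assumes "arc_ends p q"
  shows "arc_interior (garc p q) = garc p q - {p, q}"
  unfolding arc_interior_def using arc_endpoint_garc_iff[OF assms] by auto

lemma mem_arc_interior_iff:
  assumes "arc_ends p q"
  shows "z \<in> arc_interior (garc p q) \<longleftrightarrow>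
    norm z = 1 \<and> (p \<times> q) \<bullet> z = 0 \<and> det3 p z (p \<times> q) > 0 \<and> det3 z q (p \<times> q) > 0"
proof -
  have "z \<in> garc p q \<Longrightarrow> z \<noteq> p \<and> z \<noteq> q \<longleftrightarrow> det3 p z (p \<times> q) \<noteq> 0 \<and> det3 z q (p \<times> q) \<noteq> 0"
    using garc_eq_end_if_det3_eq_0[OF assms, of z] det3_self[of p "p \<times> q"] det3_self[of q "p \<times> q"]
      arc_ends_det3_pos[OF assms] by auto
  with mem_garc_iff[OF assms, of z] show ?thesis
    unfolding arc_interior_garc[OF assms] by (auto simp: less_le)
qed

lemma det3_sgn: "det3 u (sgn w) v = det3 u w v / norm w" "det3 (sgn w) u v = det3 w u v / norm w"
  by (simp_all add: sgn_div_norm det3_linear divide_inverse mult.commute)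

lemma inner_sgn: "n \<bullet> sgn w = (n \<bullet> w) / norm w"
  by (simp add: sgn_div_norm divide_inverse mult.commute)

lemma sgn_comb_mem_garc:
  assumes "arc_ends p q" "u \<in> garc p q" "v \<in> garc p q" "a \<ge> 0" "b \<ge> 0" "a *\<^sub>R u + b *\<^sub>R v \<noteq> 0"
  shows "sgn (a *\<^sub>R u + b *\<^sub>R v) \<in> garc p q"
proof -
  let ?w = "a *\<^sub>R u + b *\<^sub>R v"
  have "norm ?w > 0" using assms(6) by simp
  with assms(2-5) show ?thesis
    unfolding mem_garc_iff[OF assms(1)]
    by (simp add: det3_sgn inner_sgn det3_linear inner_add_right norm_sgn)
qed

lemma arc_ends_opposite_sides:
  assumes pq: "arc_ends p q" and z: "z \<in> arc_interior (garc p q)" "m \<bullet> z = 0"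
    and "m \<bullet> p \<noteq> 0 \<or> m \<bullet> q \<noteq> 0"
  shows "(m \<bullet> p > 0 \<and> m \<bullet> q < 0) \<or> (m \<bullet> p < 0 \<and> m \<bullet> q > 0)"
proof -
  define N where "N = p \<times> q"
  define \<alpha> where "\<alpha> = det3 z q N / det3 p q N"
  define \<beta> where "\<beta> = det3 p z N / det3 p q N"
  have "N \<bullet> z = 0" "det3 p z N > 0" "det3 z q N > 0"
    using mem_arc_interior_iff[OF pq] z(1) by (auto simp: N_def)
  moreover have "det3 p q N > 0" using arc_ends_det3_pos[OF pq] by (simp add: N_def)
  ultimately have "\<alpha> > 0" "\<beta> > 0" by (simp_all add: \<alpha>_def \<beta>_def)
  have "z = \<alpha> *\<^sub>R p + \<beta> *\<^sub>R q"
    unfolding \<alpha>_def \<beta>_def N_def by (rule garc_plane_decomp[OF pq]) (use \<open>N \<bullet> z = 0\<close> N_def in simp)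
  then have sum: "\<alpha> * (m \<bullet> p) = - (\<beta> * (m \<bullet> q))"
    using z(2) by (simp add: inner_add_right eq_neg_iff_add_eq_0)
  have "m \<bullet> p > 0 \<longleftrightarrow> \<alpha> * (m \<bullet> p) > 0" "m \<bullet> p < 0 \<longleftrightarrow> \<alpha> * (m \<bullet> p) < 0"
    "m \<bullet> q > 0 \<longleftrightarrow> \<beta> * (m \<bullet> q) > 0" "m \<bullet> q < 0 \<longleftrightarrow> \<beta> * (m \<bullet> q) < 0"
    using \<open>\<alpha> > 0\<close> \<open>\<beta> > 0\<close> by (simp_all add: zero_less_mult_iff mult_less_0_iff)
  then show ?thesis using sum assms(4) by (auto simp: neg_less_0_iff_less)
qed

lemma eventually_weight_pos:
  fixes A B :: real
  assumes "A > 0"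
  shows "\<forall>\<^sub>F t in at_right 0. 0 < t \<and> t < 1 \<and> (1 - t) * A + t * B > 0"
proof -
  have "((\<lambda>t. (1 - t) * A + t * B) \<longlongrightarrow> (1 - 0) * A + 0 * B) (at_right 0)"
    by (intro tendsto_intros)
  then have "\<forall>\<^sub>F t in at_right 0. (1 - t) * A + t * B > 0"
    using assms by (simp add: order_tendstoD(1))
  moreover have "\<forall>\<^sub>F t in at_right 0. t \<in> {0<..<1::real}"
    by (rule eventually_at_right_real) simp
  ultimately show ?thesis
    by eventually_elim simp
qed

lemma arc_interiors_meet_if_coplanar:
  assumes pq: "arc_ends p q" and pq': "arc_ends p' q'"
    and q: "q \<in> arc_interior (garc p' q')"
    and coplanar: "(p \<times> q) \<bullet> p' = 0" "(p \<times> q) \<bullet> q' = 0"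
  shows "\<exists>z. z \<in> arc_interior (garc p q) \<and> z \<in> arc_interior (garc p' q')"
proof -
  define N where "N = p \<times> q"
  define N' where "N' = p' \<times> q'"
  have q': "norm q = 1" "N' \<bullet> q = 0" "det3 p' q N' > 0" "det3 q q' N' > 0"
    using mem_arc_interior_iff[OF pq'] q N'_def by auto
  have "det3 p' q' p = 0"
    using coplanar arc_ends_cross_neq_0[OF pq] det3_eq_0_if_orthogonal[of N p' q' p]
    by (simp add: N_def dot_cross_self inner_commute)
  then have N'p: "N' \<bullet> p = 0" by (simp add: N'_def det3_def)
  have dpq: "det3 p q N > 0" using arc_ends_det3_pos[OF pq] N_def by simp
  have "\<forall>\<^sub>F t in at_right 0. 0 < t \<and> t < 1
      \<and> (1 - t) * det3 p' q N' + t * det3 p' p N' > 0 \<and> (1 - t) * det3 q q' N' + t * det3 p q' N' > 0"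
    using eventually_weight_pos[OF q'(3)] eventually_weight_pos[OF q'(4)]
    by eventually_elim blast
  then obtain t where t: "0 < t" "t < 1"
    "(1 - t) * det3 p' q N' + t * det3 p' p N' > 0"
    "(1 - t) * det3 q q' N' + t * det3 p q' N' > 0"
    using eventually_happens'[OF trivial_limit_at_right_real] by blast
  define w where "w = (1 - t) *\<^sub>R q + t *\<^sub>R p"
  have dw: "det3 p w N = (1 - t) * det3 p q N" "det3 w q N = t * det3 p q N"
    by (simp_all add: w_def det3_linear det3_self)
  then have "w \<noteq> 0" using t dpq by (auto simp: det3_def)
  then have nw: "norm w > 0" by simp
  have "N \<bullet> w = 0" by (simp add: w_def N_def inner_add_right cross_orthogonal)
  then have "sgn w \<in> arc_interior (garc p q)"
    using dw t dpq nw unfolding mem_arc_interior_iff[OF pq] N_def[symmetric]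
    by (simp add: det3_sgn inner_sgn norm_sgn)
  moreover have "sgn w \<in> arc_interior (garc p' q')"
    using q' t nw N'p unfolding mem_arc_interior_iff[OF pq'] N'_def[symmetric]
    by (simp add: det3_sgn inner_sgn norm_sgn w_def inner_add_right det3_linear)
  ultimately show ?thesis by blast
qed

lemma spherical_diagram_arc:
  assumes "spherical_diagram D" "B \<in> D"
  obtains p q where "arc_ends p q" "B = garc p q"
proof -
  have "is_arc B" using assms unfolding spherical_diagram_def by simp
  then show ?thesis using that unfolding is_arc_def by blast
qed

lemma spherical_diagram_interior_disjoint:
  assumes "spherical_diagram D" "A \<in> D" "B \<in> D" "z \<in> arc_interior A" "z \<in> arc_interior B"
  shows "A = B"
proof -
  have "\<forall>A\<in>D. \<forall>B\<in>D. A \<noteq> B \<longrightarrow> arc_interior A \<inter> arc_interior B = {}"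
    using assms(1) unfolding spherical_diagram_def by simp
  then show ?thesis using assms(2-) by blast
qed

lemma spherical_diagram_blocked:
  assumes "spherical_diagram D" "A \<in> D" "arc_endpoint A x"
  obtains B where "B \<in> D" "x \<in> arc_interior B"
proof -
  have "\<forall>A\<in>D. \<forall>x. arc_endpoint A x \<longrightarrow> (\<exists>B\<in>D. x \<in> arc_interior B)"
    using assms(1) unfolding spherical_diagram_def by simp
  then show ?thesis using assms(2,3) that by blast
qed

text \<open>With the pole \<open>b\<close> of the arc on the positive side of \<open>x\<close>, the end \<open>q\<close> lies strictly
  between \<open>x\<close> and \<open>b\<close>: otherwise \<open>b\<close> would lie on the arc between \<open>x\<close> and \<open>q\<close>.\<close>
lemma garc_end_between_point_and_pole:
  assumes pq: "arc_ends p q" and x: "x \<in> arc_interior (garc p q)"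
    and b: "norm b = 1" "b \<notin> garc p q" "- b \<notin> garc p q" "(p \<times> q) \<bullet> b = 0"
    and pos: "det3 x b (p \<times> q) > 0"
  obtains \<gamma> \<delta> where "\<gamma> > 0" "\<delta> > 0" "q = \<gamma> *\<^sub>R x + \<delta> *\<^sub>R b"
proof -
  define N where "N = p \<times> q"
  have N: "N \<noteq> 0" using arc_ends_cross_neq_0[OF pq] by (simp add: N_def)
  have xN: "norm x = 1" "N \<bullet> x = 0" "det3 x q N > 0"
    using mem_arc_interior_iff[OF pq] x by (auto simp: N_def)
  have qN: "norm q = 1" "N \<bullet> q = 0" "N \<bullet> b = 0"
    using pq b(4) by (auto simp: N_def arc_ends_def cross_orthogonal)
  have posN: "det3 x b N > 0" using pos by (simp add: N_def)
  have xB: "x \<in> garc p q" and qB: "q \<in> garc p q"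
    using x ends_mem_garc[OF pq] by (auto simp: arc_interior_def)
  have "det3 x b q = 0"
    by (rule det3_eq_0_if_orthogonal[OF N]) (use xN qN in \<open>simp_all add: inner_commute\<close>)
  then have q: "q = (det3 q b N / det3 x b N) *\<^sub>R x + (det3 x q N / det3 x b N) *\<^sub>R b"
    by (rule coplanar_decomp) (use posN in simp)
  have "det3 q b N > 0"
  proof -
    have "q \<times> b \<noteq> 0" by (rule cross_neq_0_if_unit) (use qN b qB in auto)
    then have "det3 q b N \<noteq> 0" using det3_neq_0_if_normal[OF N] qN by blast
    moreover have "\<not> det3 q b N < 0"
    proof
      assume "det3 q b N < 0"
      then have "det3 b q N > 0" using det3_swap[of b q N] by simp
      have "det3 x q b = 0"
        by (rule det3_eq_0_if_orthogonal[OF N]) (use xN qN in \<open>simp_all add: inner_commute\<close>)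
      then have "b = (det3 b q N / det3 x q N) *\<^sub>R x + (det3 x b N / det3 x q N) *\<^sub>R q"
        by (rule coplanar_decomp) (use xN(3) in simp)
      then have comb: "(det3 b q N / det3 x q N) *\<^sub>R x + (det3 x b N / det3 x q N) *\<^sub>R q = b"
        by (rule sym)
      have "sgn ((det3 b q N / det3 x q N) *\<^sub>R x + (det3 x b N / det3 x q N) *\<^sub>R q) \<in> garc p q"
        using \<open>det3 b q N > 0\<close> xN(3) posN b(1)
        by (intro sgn_comb_mem_garc[OF pq xB qB]) (auto simp: comb)
      then show False using b(1,2) by (simp add: comb sgn_div_norm)
    qed
    ultimately show ?thesis by simp
  qed
  then show ?thesis
    using that[OF _ _ q] xN(3) posN by simp
qed


section \<open>Closed convex cones and their traces on the sphere\<close>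

locale closed_convex_cone =
  fixes C :: "pt set"
  assumes convex_cone: "convex_cone C" and closed: "closed C"
begin

definition region :: "pt set" where
  "region = sphere 0 1 \<inter> C"

definition region_boundary :: "pt set" where
  "region_boundary = top_of_set (sphere 0 1) frontier_of region"

lemma zero_mem: "0 \<in> C"
  using convex_cone convex_cone_contains_0 by blast

lemma scale_mem: "u \<in> C \<Longrightarrow> c \<ge> 0 \<Longrightarrow> c *\<^sub>R u \<in> C"
  using convex_cone convex_cone_scaleR by blast

lemma add_mem: "u \<in> C \<Longrightarrow> v \<in> C \<Longrightarrow> u + v \<in> C"
  using convex_cone convex_cone_add by blast

lemma comb_mem: "u \<in> C \<Longrightarrow> v \<in> C \<Longrightarrow> a \<ge> 0 \<Longrightarrow> b \<ge> 0 \<Longrightarrow> a *\<^sub>R u + b *\<^sub>R v \<in> C"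
  by (intro add_mem scale_mem)

lemma sgn_mem: "u \<in> C \<Longrightarrow> sgn u \<in> C"
  unfolding sgn_div_norm by (rule scale_mem) auto

lemma sgn_mem_region: "u \<in> C \<Longrightarrow> u \<noteq> 0 \<Longrightarrow> sgn u \<in> region"
  by (simp add: region_def sgn_mem norm_sgn)

lemma supporting_normal:
  assumes "z \<in> C" "z \<notin> interior C"
  obtains m where "m \<noteq> 0" "m \<bullet> z = 0" "\<And>c. c \<in> C \<Longrightarrow> m \<bullet> c \<ge> 0"
proof -
  have "convex C" using convex_cone by (simp add: convex_cone_def)
  obtain m where m: "m \<noteq> 0" "\<And>c. c \<in> C \<Longrightarrow> m \<bullet> z \<le> m \<bullet> c"
  proof (cases "interior C = {}")
    case True
    obtain a b where ab: "a \<noteq> 0" "C \<subseteq> {x. a \<bullet> x = b}"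
      by (rule empty_interior_subset_hyperplane[OF \<open>convex C\<close> True])
    have "a \<bullet> z \<le> a \<bullet> c" if "c \<in> C" for c
      using subsetD[OF ab(2) assms(1)] subsetD[OF ab(2) that] by simp
    then show ?thesis by (rule that[OF ab(1)])
  next
    case False
    then have "z \<notin> rel_interior C" using assms by (simp add: rel_interior_nonempty_interior)
    then show ?thesis
      using that supporting_hyperplane_rel_boundary[OF \<open>convex C\<close> assms(1)] by metis
  qed
  have "m \<bullet> z \<le> 0" using m(2)[OF zero_mem] by simp
  moreover have "m \<bullet> z \<le> m \<bullet> (2 *\<^sub>R z)" by (rule m(2), rule scale_mem[OF assms(1)]) simp
  ultimately have "m \<bullet> z = 0" by simp
  with m show ?thesis using that by fastforce
qed

lemma inner_pos_if_interior:
  assumes "w \<in> interior C" "m \<noteq> 0" "\<And>c. c \<in> C \<Longrightarrow> m \<bullet> c \<ge> 0"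
  shows "m \<bullet> w > 0"
proof -
  obtain r where r: "r > 0" "ball w r \<subseteq> C" using assms(1) by (meson mem_interior)
  define w' where "w' = w - (r / 2 / norm m) *\<^sub>R m"
  have "dist w w' < r" using r assms(2) by (simp add: w'_def dist_norm)
  then have "m \<bullet> w' \<ge> 0" using r assms(3) by auto
  moreover have "m \<bullet> w' = m \<bullet> w - r / 2 * norm m"
    using assms(2) by (simp add: w'_def inner_diff_right power2_norm_eq_inner[symmetric] power2_eq_square)
  moreover have "r / 2 * norm m > 0" using r assms(2) by simp
  ultimately show ?thesis by linarith
qed

lemma interior_if_strictly_supported:
  assumes "z \<in> C" "\<And>m. m \<noteq> 0 \<Longrightarrow> (\<And>c. c \<in> C \<Longrightarrow> m \<bullet> c \<ge> 0) \<Longrightarrow> m \<bullet> z > 0"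
  shows "z \<in> interior C"
proof (rule ccontr)
  assume "z \<notin> interior C"
  then obtain m where "m \<noteq> 0" "m \<bullet> z = 0" "\<And>c. c \<in> C \<Longrightarrow> m \<bullet> c \<ge> 0"
    using supporting_normal[OF assms(1)] by blast
  with assms(2) show False by fastforce
qed

lemma interior_segment:
  assumes "u \<in> C" "w \<in> interior C" "a \<ge> 0" "b > 0"
  shows "a *\<^sub>R u + b *\<^sub>R w \<in> interior C"
proof (rule interior_if_strictly_supported)
  show "a *\<^sub>R u + b *\<^sub>R w \<in> C" using assms interior_subset comb_mem by force
  fix m assume m: "m \<noteq> 0" "\<And>c. c \<in> C \<Longrightarrow> m \<bullet> c \<ge> 0"
  have "m \<bullet> w > 0" using inner_pos_if_interior assms(2) m by blast
  moreover have "m \<bullet> u \<ge> 0" using m assms by auto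
  ultimately show "m \<bullet> (a *\<^sub>R u + b *\<^sub>R w) > 0"
    using assms by (simp add: inner_add_right add_nonneg_pos)
qed

lemma interior_if_det3_neq_0:
  assumes "u \<in> C" "v \<in> C" "w \<in> C" "det3 u v w \<noteq> 0" "a > 0" "b > 0" "c > 0"
  shows "a *\<^sub>R u + b *\<^sub>R v + c *\<^sub>R w \<in> interior C"
proof (rule interior_if_strictly_supported)
  show "a *\<^sub>R u + b *\<^sub>R v + c *\<^sub>R w \<in> C"
    using assms by (intro add_mem scale_mem) auto
  fix m assume m: "m \<noteq> 0" "\<And>c. c \<in> C \<Longrightarrow> m \<bullet> c \<ge> 0"
  have "m \<bullet> u \<ge> 0" "m \<bullet> v \<ge> 0" "m \<bullet> w \<ge> 0" using m assms by auto
  moreover have "m \<bullet> u \<noteq> 0 \<or> m \<bullet> v \<noteq> 0 \<or> m \<bullet> w \<noteq> 0"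
    using orthogonal_if_det3_neq_0[OF assms(4)] m(1) by blast
  ultimately have "a * (m \<bullet> u) + b * (m \<bullet> v) + c * (m \<bullet> w) > 0"
    using assms(5-7) mult_pos_pos[of a "m \<bullet> u"] mult_pos_pos[of b "m \<bullet> v"] mult_pos_pos[of c "m \<bullet> w"]
      mult_nonneg_nonneg[of a "m \<bullet> u"] mult_nonneg_nonneg[of b "m \<bullet> v"] mult_nonneg_nonneg[of c "m \<bullet> w"]
    by linarith
  then show "m \<bullet> (a *\<^sub>R u + b *\<^sub>R v + c *\<^sub>R w) > 0" by (simp add: inner_add_right)
qed

lemma interior_if_off_supporting_plane:
  assumes "x \<in> C" "b \<in> C" "b' \<in> C" "x \<times> b \<noteq> 0" "M \<bullet> x = 0" "M \<bullet> b = 0" "M \<bullet> b' \<noteq> 0"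
    and "\<alpha> > 0" "\<beta> > 0" "\<gamma> > 0"
  shows "\<alpha> *\<^sub>R x + \<beta> *\<^sub>R b + \<gamma> *\<^sub>R b' \<in> interior C"
proof (rule interior_if_det3_neq_0)
  obtain k where "M = k *\<^sub>R (x \<times> b)"
    using orthogonal_eq_multiple_cross[OF assms(4)] assms(5,6) by metis
  then show "det3 x b b' \<noteq> 0" using assms(7) by (auto simp: det3_def)
qed (use assms in auto)

text \<open>A supporting plane at the combination would contain \<open>x\<close> and \<open>b\<close>, hence be the plane
  \<open>N \<bullet> z = 0\<close>, which has points of the cone strictly on both sides.\<close>
lemma interior_if_plane_splits:
  assumes "N \<noteq> 0" "x \<in> C" "b \<in> C" "N \<bullet> x = 0" "N \<bullet> b = 0" "x \<times> b \<noteq> 0"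
    "c1 \<in> C" "c2 \<in> C" "N \<bullet> c1 > 0" "N \<bullet> c2 < 0" "\<alpha> > 0" "\<beta> > 0"
  shows "\<alpha> *\<^sub>R x + \<beta> *\<^sub>R b \<in> interior C"
proof (rule interior_if_strictly_supported)
  show "\<alpha> *\<^sub>R x + \<beta> *\<^sub>R b \<in> C" using assms comb_mem by simp
  fix m assume m: "m \<noteq> 0" "\<And>c. c \<in> C \<Longrightarrow> m \<bullet> c \<ge> 0"
  have "m \<bullet> x \<ge> 0" "m \<bullet> b \<ge> 0" using m assms by auto
  moreover have "m \<bullet> x \<noteq> 0 \<or> m \<bullet> b \<noteq> 0"
  proof (rule ccontr)
    assume "\<not> (m \<bullet> x \<noteq> 0 \<or> m \<bullet> b \<noteq> 0)"
    then obtain k where k: "m = k *\<^sub>R (x \<times> b)"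
      using orthogonal_eq_multiple_cross[OF assms(6)] by (metis inner_commute)
    obtain k' where k': "N = k' *\<^sub>R (x \<times> b)"
      using orthogonal_eq_multiple_cross[OF assms(6)] assms(4,5) by (metis inner_commute)
    have "k' \<noteq> 0" using k' assms(1) by auto
    define r where "r = k / k'"
    have mN: "m = r *\<^sub>R N" using k k' \<open>k' \<noteq> 0\<close> by (simp add: r_def)
    then have "0 \<le> r * (N \<bullet> c1)" "0 \<le> r * (N \<bullet> c2)"
      using m(2)[OF assms(7)] m(2)[OF assms(8)] by simp_all
    then have "r = 0" using assms(9,10) by (auto simp: zero_le_mult_iff)
    then show False using mN m(1) by simp
  qed
  ultimately have "\<alpha> * (m \<bullet> x) + \<beta> * (m \<bullet> b) > 0"
    using assms(11,12) mult_pos_pos[of \<alpha> "m \<bullet> x"] mult_pos_pos[of \<beta> "m \<bullet> b"]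
      mult_nonneg_nonneg[of \<alpha> "m \<bullet> x"] mult_nonneg_nonneg[of \<beta> "m \<bullet> b"]
    by linarith
  then show "m \<bullet> (\<alpha> *\<^sub>R x + \<beta> *\<^sub>R b) > 0" by (simp add: inner_add_right)
qed

lemma region_closedin: "closedin (top_of_set (sphere 0 1)) region"
  unfolding region_def using closed closedin_closed_Int by blast

lemma region_boundary_subset: "region_boundary \<subseteq> region"
  unfolding region_boundary_def using region_closedin frontier_of_subset_closedin by blast

lemma region_boundary_not_interior:
  assumes "z \<in> region_boundary"
  shows "z \<notin> interior C"
proof
  assume z: "z \<in> interior C"
  have "openin (top_of_set (sphere 0 1)) (sphere 0 1 \<inter> interior C)" by auto
  moreover have "sphere 0 1 \<inter> interior C \<subseteq> region"
    unfolding region_def using interior_subset by auto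
  ultimately have "sphere 0 1 \<inter> interior C \<subseteq> top_of_set (sphere 0 1) interior_of region"
    using interior_of_maximal by blast
  moreover have "z \<in> sphere 0 1" using assms region_boundary_subset region_def by auto
  ultimately show False using z assms unfolding region_boundary_def frontier_of_def by auto
qed

text \<open>Pushing \<open>z\<close> slightly against the supporting normal leaves the cone, and
  normalising keeps the perturbed point close to \<open>z\<close> on the sphere.\<close>
lemma region_boundary_if_supported:
  assumes "z \<in> region" "m \<noteq> 0" "m \<bullet> z = 0" "\<And>c. c \<in> C \<Longrightarrow> m \<bullet> c \<ge> 0"
  shows "z \<in> region_boundary"
proof -
  have "z \<notin> top_of_set (sphere 0 1) interior_of region"
  proof
    assume "z \<in> top_of_set (sphere 0 1) interior_of region"
    then obtain T where T: "openin (top_of_set (sphere 0 1)) T" "z \<in> T" "T \<subseteq> region"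
      unfolding interior_of_def by auto
    then obtain V where V: "open V" "T = V \<inter> sphere 0 1" by (auto simp: openin_open)
    then obtain r where r: "r > 0" "ball z r \<subseteq> V" using T open_contains_ball by blast
    define w where "w = z - (r / 4 / norm m) *\<^sub>R m"
    have mw: "m \<bullet> w < 0"
      using assms r by (simp add: w_def inner_diff_right power2_norm_eq_inner[symmetric] power2_eq_square)
    then have "w \<noteq> 0" by auto
    have "norm z = 1" using assms(1) by (simp add: region_def)
    moreover have "norm (w - z) = r / 4" using assms r by (simp add: w_def)
    ultimately have "norm (sgn w - z) \<le> r / 2" using norm_sgn_diff_le[of z w] \<open>w \<noteq> 0\<close> by simp
    then have "sgn w \<in> T" using V r \<open>w \<noteq> 0\<close> by (auto simp: dist_norm norm_minus_commute norm_sgn)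
    then have "m \<bullet> sgn w \<ge> 0" using T assms(4) by (auto simp: region_def)
    moreover have "m \<bullet> w / norm w < 0" using mw \<open>w \<noteq> 0\<close> by (simp add: divide_neg_pos)
    ultimately show False by (simp add: inner_sgn)
  qed
  then show ?thesis
    using assms(1) closure_of_closedin[OF region_closedin]
    unfolding region_boundary_def frontier_of_def by auto
qed

lemma interior_if_between:
  assumes "u \<in> C" "w \<in> interior C" "N \<noteq> 0" "N \<bullet> u = 0" "N \<bullet> v = 0" "N \<bullet> w = 0"
    and "det3 u v N > 0" "det3 v w N > 0" "det3 u w N > 0"
  shows "v \<in> interior C"
proof -
  have "det3 u w v = 0"
    by (rule det3_eq_0_if_orthogonal[OF assms(3)]) (use assms(4-6) in \<open>simp_all add: inner_commute\<close>)
  then have "v = (det3 v w N / det3 u w N) *\<^sub>R u + (det3 u v N / det3 u w N) *\<^sub>R w"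
    by (rule coplanar_decomp) (use assms(9) in simp)
  also have "\<dots> \<in> interior C"
    by (rule interior_segment) (use assms in auto)
  finally show ?thesis .
qed

text \<open>The normalised segment from a point of the cone to a point outside it is a connected
  subset of the sphere leaving the region, hence it meets the region's boundary.\<close>
lemma region_boundary_near_segment:
  assumes "a1 \<in> C" "a2 \<notin> C" "norm (a1 - y) \<le> r" "norm (a2 - y) \<le> r" "norm y = 1"
    and "n \<bullet> a1 > 0" "n \<bullet> a2 > 0"
  obtains z where "z \<in> region_boundary" "norm (z - y) \<le> 2 * r" "n \<bullet> z > 0"
proof -
  define w where "w s = (1 - s) *\<^sub>R a1 + s *\<^sub>R a2" for s :: real
  have nw: "n \<bullet> w s > 0" if "s \<in> {0..1}" for s
  proof -
    have "(1 - s) * (n \<bullet> a1) + s * (n \<bullet> a2) > 0"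
      using that assms(6,7) convex_bound_lt[of "- (n \<bullet> a1)" 0 "- (n \<bullet> a2)" "1 - s" s] by simp
    then show ?thesis by (simp add: w_def inner_add_right)
  qed
  have dw: "norm (w s - y) \<le> r" if "s \<in> {0..1}" for s
  proof -
    have "w s \<in> cball y r"
      unfolding w_def
      by (rule convexD[OF convex_cball]) (use assms(3,4) that in \<open>auto simp: dist_norm norm_minus_commute\<close>)
    then show ?thesis by (simp add: dist_norm norm_minus_commute)
  qed
  have w0: "w s \<noteq> 0" if "s \<in> {0..1}" for s using nw[OF that] by auto
  define g where "g s = sgn (w s)" for s
  have "continuous_on {0..1} g"
    unfolding g_def w_def by (intro continuous_intros) (use w0 w_def in auto)
  then have "connected (g ` {0..1})" by (rule connected_continuous_image) simp
  moreover have "g ` {0..1} \<subseteq> sphere 0 1" using w0 by (auto simp: g_def norm_sgn)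
  ultimately have "connectedin (top_of_set (sphere 0 1)) (g ` {0..1})"
    by (simp add: connectedin_subtopology)
  moreover have "g 0 \<in> region"
    using sgn_mem_region assms(1) w0[of 0] by (simp add: g_def w_def)
  moreover have "g 1 \<notin> region"
  proof
    assume "g 1 \<in> region"
    then have "norm a2 *\<^sub>R sgn a2 \<in> C" by (intro scale_mem) (auto simp: g_def w_def region_def)
    moreover have "a2 \<noteq> 0" using assms(2) zero_mem by auto
    ultimately show False using assms(2) by (simp add: sgn_div_norm)
  qed
  moreover have "g 0 \<in> g ` {0..1}" "g 1 \<in> g ` {0..1}" by auto
  ultimately have "g ` {0..1} \<inter> region_boundary \<noteq> {}"
    unfolding region_boundary_def by (intro connectedin_Int_frontier_of) blast+
  then obtain s where s: "s \<in> {0..1}" "g s \<in> region_boundary" by blast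
  have "norm (g s - y) \<le> 2 * r"
    using norm_sgn_diff_le[OF assms(5) w0[OF s(1)]] dw[OF s(1)] by (simp add: g_def)
  moreover have "n \<bullet> g s > 0"
    using nw[OF s(1)] w0[OF s(1)] by (simp add: g_def inner_sgn)
  ultimately show ?thesis using that s(2) by blast
qed

text \<open>Here and below, \<open>z0\<close> is an interior point of the cone in the plane of the arc, on the
  side of \<open>q\<close> as seen from \<open>y\<close>; points of that plane angularly between a point of the cone
  and \<open>z0\<close> are interior.\<close>
lemma region_boundary_isolated_on_arc:
  assumes pq: "arc_ends p q" and y: "y \<in> arc_interior (garc p q)" "y \<in> region_boundary"
    and z0: "z0 \<in> interior C" "(p \<times> q) \<bullet> z0 = 0" "det3 y z0 (p \<times> q) > 0"
  obtains e where "e > 0" "\<And>z. z \<in> garc p q \<Longrightarrow> z \<in> region_boundary \<Longrightarrow> dist z y < e \<Longrightarrow> z = y"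
proof -
  define N where "N = p \<times> q"
  have N: "N \<noteq> 0" using arc_ends_cross_neq_0[OF pq] by (simp add: N_def)
  have z0N: "N \<bullet> z0 = 0" "det3 y z0 N > 0" using z0 by (simp_all add: N_def)
  have yN: "norm y = 1" "N \<bullet> y = 0" using y(1) mem_arc_interior_iff[OF pq] by (auto simp: N_def)
  have yC: "y \<in> C" using y(2) region_boundary_subset by (auto simp: region_def)
  have "(z0 \<times> N) \<bullet> y > 0" using z0N(2) cross_triple[of y z0 N] by (simp add: det3_def)
  then obtain e where e: "e > 0" "ball y e \<subseteq> {z. (z0 \<times> N) \<bullet> z > 0}"
    using open_contains_ball[of "{z. (z0 \<times> N) \<bullet> z > 0}"] open_halfspace_gt by blast
  show ?thesis
  proof (rule that[OF e(1)])
    fix z assume z: "z \<in> garc p q" "z \<in> region_boundary" "dist z y < e"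
    have zN: "norm z = 1" "N \<bullet> z = 0" using z(1) mem_garc_iff[OF pq] by (auto simp: N_def)
    have zC: "z \<in> C" using z(2) region_boundary_subset by (auto simp: region_def)
    have "(z0 \<times> N) \<bullet> z > 0" using e(2) z(3) by (auto simp: dist_commute)
    then have zz0: "det3 z z0 N > 0" using cross_triple[of z z0 N] by (simp add: det3_def)
    consider "det3 y z N > 0" | "det3 y z N = 0" | "det3 y z N < 0" by linarith
    then show "z = y"
    proof cases
      case 1
      then have "z \<in> interior C"
        using interior_if_between[OF yC z0(1) N yN(2) zN(2) z0N(1)] zz0 z0N(2) by blast
      then show ?thesis using region_boundary_not_interior z(2) by blast
    next
      case 2
      have "det3 y z0 z = 0"
        by (rule det3_eq_0_if_orthogonal[OF N]) (use yN zN z0N in \<open>simp_all add: inner_commute\<close>)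
      then have "z = (det3 z z0 N / det3 y z0 N) *\<^sub>R y"
        using coplanar_decomp[of y z0 z N] 2 z0N(2) by simp
      moreover have "det3 z z0 N / det3 y z0 N \<ge> 0" using zz0 z0N(2) by simp
      ultimately show ?thesis using unit_nonneg_multiple_eq[OF zN(1) yN(1)] by blast
    next
      case 3
      then have "y \<in> interior C"
        using interior_if_between[OF zC z0(1) N zN(2) yN(2) z0N(1)] zz0 z0N(2) det3_swap[of y z N]
        by simp
      then show ?thesis using region_boundary_not_interior y(2) by blast
    qed
  qed
qed

text \<open>Shifting two nearby points, one interior to the cone and one outside it, off the plane
  \<open>n \<bullet> z = 0\<close> to its positive side keeps them inside resp. outside the cone.\<close>
lemma region_boundary_near_pair:
  assumes z1: "z1 \<in> interior C" and z2: "z2 \<notin> C" and n: "n \<noteq> 0" "n \<bullet> z1 = 0" "n \<bullet> z2 = 0"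
    and y: "norm y = 1" "norm (z1 - y) < r" "norm (z2 - y) < r"
  obtains z where "z \<in> region_boundary" "norm (z - y) < 2 * r" "n \<bullet> z > 0"
proof -
  obtain r1 where r1: "r1 > 0" "ball z1 r1 \<subseteq> C" using z1 mem_interior by blast
  obtain r2 where r2: "r2 > 0" "ball z2 r2 \<subseteq> - C"
    using z2 closed open_contains_ball[of "- C"] by (auto simp: open_Compl)
  define s where "s = max (norm (z1 - y)) (norm (z2 - y))"
  define d where "d = min (min r1 r2) (r - s) / 2"
  have "s < r" using y by (simp add: s_def)
  have "min (min r1 r2) (r - s) > 0" "min (min r1 r2) (r - s) \<le> r1"
    "min (min r1 r2) (r - s) \<le> r2" "min (min r1 r2) (r - s) \<le> r - s"
    using r1(1) r2(1) \<open>s < r\<close> by simp_all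
  then have d: "0 < d" "d < r1" "d < r2" "s + d < r" unfolding d_def by linarith+
  define a where "a z = z + (d / norm n) *\<^sub>R n" for z
  have a_near: "norm (a z - z) = d" for z using d n(1) by (simp add: a_def)
  have "n \<bullet> a z = n \<bullet> z + d * norm n" for z
    using n(1) by (simp add: a_def inner_add_right power2_norm_eq_inner[symmetric] power2_eq_square)
  then have "n \<bullet> a z1 > 0" "n \<bullet> a z2 > 0" using n d(1) by simp_all
  moreover have "norm (a z1 - y) \<le> s + d" "norm (a z2 - y) \<le> s + d"
    using a_near norm_triangle_ineq[of "a z1 - z1" "z1 - y"] norm_triangle_ineq[of "a z2 - z2" "z2 - y"]
    by (simp_all add: s_def)
  moreover have "a z1 \<in> ball z1 r1" "a z2 \<in> ball z2 r2"
    using a_near[of z1] a_near[of z2] d by (simp_all add: dist_norm norm_minus_commute)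
  then have "a z1 \<in> C" "a z2 \<notin> C" using r1 r2 by blast+
  ultimately obtain z where "z \<in> region_boundary" "norm (z - y) \<le> 2 * (s + d)" "n \<bullet> z > 0"
    using region_boundary_near_segment[of "a z1" "a z2" y "s + d" n] y(1) by blast
  then show ?thesis using that d(4) by simp
qed

lemma region_boundary_on_side:
  assumes pq: "arc_ends p q" and y: "y \<in> arc_interior (garc p q)" "y \<in> region_boundary"
    and z0: "z0 \<in> interior C" "(p \<times> q) \<bullet> z0 = 0" "det3 y z0 (p \<times> q) > 0"
    and n: "n \<noteq> 0" "n \<bullet> p = 0" "n \<bullet> q = 0" and "e > 0"
  obtains z where "z \<in> region_boundary" "dist z y < e" "n \<bullet> z > 0"
proof -
  define N where "N = p \<times> q"
  have N: "N \<noteq> 0" using arc_ends_cross_neq_0[OF pq] by (simp add: N_def)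
  have z0N: "N \<bullet> z0 = 0" "det3 y z0 N > 0" using z0 by (simp_all add: N_def)
  have yN: "norm y = 1" "N \<bullet> y = 0" "det3 p y N > 0"
    using y(1) mem_arc_interior_iff[OF pq] by (auto simp: N_def)
  have yC: "y \<in> C" using y(2) region_boundary_subset by (auto simp: region_def)
  have plane: "n \<bullet> v = 0" if "N \<bullet> v = 0" for v
    using garc_plane_decomp[OF pq that[unfolded N_def]] n(2,3)
    by (metis inner_add_right inner_scaleR_right mult_zero_right add_0)
  define K where "K = norm (z0 - y) + norm (p - y)"
  have "((\<lambda>t. t * K) \<longlongrightarrow> 0 * K) (at_right 0)" by (intro tendsto_intros)
  then have "\<forall>\<^sub>F t in at_right 0. t * K < e / 2"
    using order_tendstoD(2)[of "\<lambda>t. t * K" 0 "at_right 0" "e / 2"] \<open>e > 0\<close> by simp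
  moreover have "\<forall>\<^sub>F t in at_right 0. 0 < t \<and> t < 1 \<and> (1 - t) * det3 y z0 N + t * det3 p z0 N > 0"
    using eventually_weight_pos[OF z0N(2)] .
  ultimately have "\<forall>\<^sub>F t in at_right 0.
      t * K < e / 2 \<and> 0 < t \<and> t < 1 \<and> (1 - t) * det3 y z0 N + t * det3 p z0 N > 0"
    by (rule eventually_conj)
  then obtain t where t: "t * K < e / 2" "0 < t" "t < 1" "(1 - t) * det3 y z0 N + t * det3 p z0 N > 0"
    using eventually_happens'[OF trivial_limit_at_right_real] by blast
  define z1 where "z1 = (1 - t) *\<^sub>R y + t *\<^sub>R z0"
  define z2 where "z2 = (1 - t) *\<^sub>R y + t *\<^sub>R p"
  have zN: "N \<bullet> z1 = 0" "N \<bullet> z2 = 0"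
    using yN(2) z0N(1) by (simp_all add: z1_def z2_def inner_add_right N_def cross_orthogonal)
  have z1: "z1 \<in> interior C" using interior_segment[OF yC z0(1)] t by (simp add: z1_def)
  have z2: "z2 \<notin> C"
  proof
    assume "z2 \<in> C"
    have "det3 z2 y N > 0" "det3 z2 z0 N > 0"
      using t yN(3) by (simp_all add: z2_def det3_linear det3_self)
    then have "y \<in> interior C"
      using interior_if_between[OF \<open>z2 \<in> C\<close> z0(1) N zN(2) yN(2) z0N(1)] z0N(2) by blast
    then show False using region_boundary_not_interior y(2) by blast
  qed
  have "z1 - y = t *\<^sub>R (z0 - y)" "z2 - y = t *\<^sub>R (p - y)"
    by (simp_all add: z1_def z2_def algebra_simps)
  then have dist: "norm (z1 - y) = t * norm (z0 - y)" "norm (z2 - y) = t * norm (p - y)"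
    using t(2) by simp_all
  have "norm (z0 - y) \<le> K" "norm (p - y) \<le> K" by (simp_all add: K_def)
  then have "t * norm (z0 - y) \<le> t * K" "t * norm (p - y) \<le> t * K"
    using mult_left_mono less_imp_le[OF t(2)] by blast+
  then have "norm (z1 - y) < e / 2" "norm (z2 - y) < e / 2"
    unfolding dist using t(1) by linarith+
  then obtain z where "z \<in> region_boundary" "norm (z - y) < 2 * (e / 2)" "n \<bullet> z > 0"
    using region_boundary_near_pair[OF z1 z2 n(1) plane[OF zN(1)] plane[OF zN(2)] yN(1)] by blast
  then show ?thesis using that by (simp add: dist_norm)
qed

lemma crosses_at_region_boundary:
  assumes pq: "arc_ends p q" and y: "y \<in> arc_interior (garc p q)" "y \<in> region_boundary"
    and z0: "z0 \<in> interior C" "(p \<times> q) \<bullet> z0 = 0" "det3 y z0 (p \<times> q) > 0"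
  shows "crosses_at (garc p q) region_boundary y"
  unfolding crosses_at_def
proof (intro conjI exI[of _ "p \<times> q"] allI impI ballI)
  show "y \<in> arc_interior (garc p q)" "y \<in> region_boundary" by (fact y)+
  show "\<exists>e>0. \<forall>z\<in>garc p q \<inter> region_boundary. dist z y < e \<longrightarrow> z = y"
    using region_boundary_isolated_on_arc[OF assms] by (metis IntE)
  show "p \<times> q \<noteq> 0" by (rule arc_ends_cross_neq_0[OF pq])
  show "(p \<times> q) \<bullet> z = 0" if "z \<in> garc p q" for z using that mem_garc_iff[OF pq] by blast
  fix e :: real assume "e > 0"
  show "\<exists>z\<in>region_boundary. dist z y < e \<and> (p \<times> q) \<bullet> z > 0"
    using region_boundary_on_side[OF assms arc_ends_cross_neq_0[OF pq] cross_orthogonal \<open>e > 0\<close>]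
    by blast
  show "\<exists>z\<in>region_boundary. dist z y < e \<and> (p \<times> q) \<bullet> z < 0"
    using region_boundary_on_side[OF assms, of "- (p \<times> q)"] arc_ends_cross_neq_0[OF pq] \<open>e > 0\<close>
    by (auto simp: cross_orthogonal)
qed

lemma path_in_region_along_arc:
  assumes pq: "arc_ends p q" and x: "x \<in> garc p q" "x \<in> C" and y: "y \<in> garc p q" "y \<in> C"
    and "x \<noteq> - y"
  obtains g where "path g" "path_image g \<subseteq> garc p q \<inter> region" "pathstart g = x" "pathfinish g = y"
proof
  have unit: "norm x = 1" "norm y = 1" using x(1) y(1) mem_garc_iff[OF pq] by auto
  define w where "w s = (1 - s) *\<^sub>R x + s *\<^sub>R y" for s :: real
  have w0: "w s \<noteq> 0" if "s \<in> {0..1}" for s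
  proof
    assume "w s = 0"
    then have "(1 - s) *\<^sub>R x = - (s *\<^sub>R y)" by (simp add: w_def eq_neg_iff_add_eq_0)
    then have "norm ((1 - s) *\<^sub>R x) = norm (s *\<^sub>R y)" by (metis norm_minus_cancel)
    then have "1 - s = s" using that unit by simp
    then have "w s = s *\<^sub>R (x + y)" by (simp add: w_def scaleR_add_right)
    then have "x + y = 0" using \<open>w s = 0\<close> \<open>1 - s = s\<close> by auto
    then show False using \<open>x \<noteq> - y\<close> by (simp add: eq_neg_iff_add_eq_0)
  qed
  define g where "g s = sgn (w s)" for s
  show "path g" unfolding path_def g_def w_def
    by (intro continuous_intros) (use w0 w_def in auto)
  show "path_image g \<subseteq> garc p q \<inter> region"
  proof
    fix z assume "z \<in> path_image g"
    then obtain s where s: "s \<in> {0..1}" "z = g s" by (auto simp: path_image_def)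
    have "z \<in> garc p q"
      unfolding s g_def w_def by (rule sgn_comb_mem_garc) (use pq x y s w0 w_def in auto)
    moreover have "z \<in> region"
      unfolding s g_def w_def using w0[OF s(1)] x y s by (intro sgn_mem_region comb_mem) (auto simp: w_def)
    ultimately show "z \<in> garc p q \<inter> region" by blast
  qed
  show "pathstart g = x" "pathfinish g = y"
    using unit by (simp_all add: pathstart_def pathfinish_def g_def w_def sgn_div_norm)
qed

lemma face_of_supporting_plane:
  assumes "M \<noteq> 0" "\<And>c. c \<in> C \<Longrightarrow> M \<bullet> c \<ge> 0"
    and "x \<in> C" "b \<in> C" "M \<bullet> x = 0" "M \<bullet> b = 0" "x \<times> b \<noteq> 0"
  shows "(C \<inter> {z. M \<bullet> z = 0}) face_of C" "aff_dim (C \<inter> {z. M \<bullet> z = 0}) = 2"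
proof -
  show "(C \<inter> {z. M \<bullet> z = 0}) face_of C"
    using face_of_Int_supporting_hyperplane_ge[where a=M and b=0] convex_cone assms(2)
    by (simp add: convex_cone_def)
  have "aff_dim (C \<inter> {z. M \<bullet> z = 0}) \<le> aff_dim {z. M \<bullet> z = 0}" by (rule aff_dim_subset) auto
  also have "\<dots> = 2" using assms(1) by simp
  finally have "aff_dim (C \<inter> {z. M \<bullet> z = 0}) \<le> 2" .
  moreover have "aff_dim {0, x, b} \<le> aff_dim (C \<inter> {z. M \<bullet> z = 0})"
    by (rule aff_dim_subset) (use assms zero_mem in auto)
  moreover have "\<not> collinear {0, x, b}" using assms(7) by (simp add: cross_eq_0)
  ultimately show "aff_dim (C \<inter> {z. M \<bullet> z = 0}) = 2"
    using collinear_aff_dim[of "{0, x, b}"] by simp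
qed

lemma ray_between_not_face:
  assumes "x \<in> C" "b \<in> C" "x \<times> b \<noteq> 0" "\<gamma> > 0" "\<delta> > 0"
  shows "\<not> (conic hull {\<gamma> *\<^sub>R x + \<delta> *\<^sub>R b}) face_of C"
proof
  define q where "q = \<gamma> *\<^sub>R x + \<delta> *\<^sub>R b"
  assume "conic hull {\<gamma> *\<^sub>R x + \<delta> *\<^sub>R b} face_of C"
  then have face: "conic hull {q} face_of C" by (simp add: q_def)
  define s where "s = \<gamma> + \<delta>"
  have s: "s > 0" using assms s_def by simp
  have "q \<in> open_segment (s *\<^sub>R x) (s *\<^sub>R b)"
    unfolding in_segment
  proof (intro conjI exI[of _ "\<delta> / s"])
    show "s *\<^sub>R x \<noteq> s *\<^sub>R b" using assms(3) s by auto
    show "0 < \<delta> / s" "\<delta> / s < 1" using assms s s_def by auto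
    have "(1 - \<delta> / s) * s = \<gamma>" "(\<delta> / s) * s = \<delta>" using s s_def by (simp_all add: field_simps)
    then show "q = (1 - \<delta> / s) *\<^sub>R s *\<^sub>R x + (\<delta> / s) *\<^sub>R s *\<^sub>R b"
      by (simp only: scaleR_scaleR q_def)
  qed
  moreover have "s *\<^sub>R x \<in> C" "s *\<^sub>R b \<in> C" using assms s scale_mem by auto
  moreover have "q \<in> conic hull {q}" by (simp add: hull_inc)
  ultimately have "s *\<^sub>R x \<in> conic hull {q}" using face_ofD[OF face] by blast
  then obtain c where c: "s *\<^sub>R x = c *\<^sub>R q" by (auto simp: conic_hull_explicit)
  have "(s *\<^sub>R x) \<times> b = (c *\<^sub>R q) \<times> b" using c by simp
  then have "s *\<^sub>R (x \<times> b) = (c * \<gamma>) *\<^sub>R (x \<times> b)"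
    by (simp add: q_def cross_add_left cross_mult_left)
  then have "s = c * \<gamma>" using assms(3) by (metis scaleR_cancel_right)
  have "x \<times> (s *\<^sub>R x) = x \<times> (c *\<^sub>R q)" using c by simp
  then have "0 = (c * \<delta>) *\<^sub>R (x \<times> b)"
    by (simp add: q_def cross_add_right cross_mult_right)
  then have "c = 0" using assms(3,5) by simp
  then show False using \<open>s = c * \<gamma>\<close> s by simp
qed

lemma two_dim_face_through:
  assumes "polyhedron C" "x \<in> C" "x \<notin> interior C" "b \<in> C" "c \<in> C" "det3 x b c \<noteq> 0"
  obtains F where "F face_of C" "aff_dim F = 2" "x \<in> F"
proof -
  have "x + b + c \<in> interior C"
    using interior_if_det3_neq_0[OF assms(2,4,5,6), of 1 1 1] by simp
  then have "interior C \<noteq> {}" by blast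
  then have "rel_interior C = interior C" "aff_dim C = 3"
    by (simp_all add: rel_interior_nonempty_interior aff_dim_nonempty_interior)
  then have "x \<in> rel_frontier C"
    unfolding rel_frontier_def using assms(2,3) closure_subset by auto
  then obtain F where "F facet_of C" "x \<in> F" using rel_frontier_of_polyhedron[OF assms(1)] by auto
  then show ?thesis using that \<open>aff_dim C = 3\<close> unfolding facet_of_def by auto
qed

lemma conic_hull_region:
  assumes "u \<in> C" "u \<noteq> 0"
  shows "conic hull region = C"
proof
  show "conic hull region \<subseteq> C"
    by (rule hull_minimal) (use convex_cone in \<open>auto simp: region_def convex_cone_def\<close>)
  show "C \<subseteq> conic hull region"
  proof
    fix z assume z: "z \<in> C"
    show "z \<in> conic hull region"
    proof (cases "z = 0")
      case True
      then show ?thesis using sgn_mem_region[OF assms] by auto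
    next
      case False
      have "norm z *\<^sub>R sgn z \<in> conic hull region"
        by (rule conic_mul[OF conic_conic_hull]) (use sgn_mem_region[OF z False] hull_inc in auto)
      then show ?thesis by (simp add: sgn_div_norm False)
    qed
  qed
qed

end

section \<open>Spherical diagrams with poles in a cone\<close>

locale diagram_in_cone = closed_convex_cone C for C +
  fixes D :: "pt set set"
  assumes polyhedral: "polyhedron C"
    and diagram: "spherical_diagram D"
    \<comment> \<open>all that is used of the attractor: each arc has its pole or anti-pole in the cone\<close>
    and pole_in_cone: "B \<in> D \<Longrightarrow>
      \<exists>b\<in>C. norm b = 1 \<and> b \<notin> B \<and> - b \<notin> B \<and> (\<exists>n. n \<noteq> 0 \<and> n \<bullet> b = 0 \<and> (\<forall>z\<in>B. n \<bullet> z = 0))"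
begin

lemma pole_of_garc:
  assumes "garc p q \<in> D" "arc_ends p q"
  obtains b where "b \<in> C" "norm b = 1" "b \<notin> garc p q" "- b \<notin> garc p q" "(p \<times> q) \<bullet> b = 0"
proof -
  obtain b n where b: "b \<in> C" "norm b = 1" "b \<notin> garc p q" "- b \<notin> garc p q"
    and n: "n \<noteq> 0" "n \<bullet> b = 0" "\<forall>z\<in>garc p q. n \<bullet> z = 0"
    using pole_in_cone[OF assms(1)] by blast
  have "n \<bullet> p = 0" "n \<bullet> q = 0" using n(3) ends_mem_garc[OF assms(2)] by auto
  then have "det3 p q b = 0"
    using det3_eq_0_if_orthogonal[OF n(1), of p q b] n(2) by (simp add: inner_commute)
  with that b show ?thesis by (simp add: det3_def)
qed

text \<open>The conclusion of the theorem, with edges and vertices of the region read as faces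
  of the cone.\<close>
definition reaches_crossing :: "pt \<Rightarrow> bool" where
  "reaches_crossing x \<longleftrightarrow> (\<exists>B\<in>D. \<exists>y. crosses_at B region_boundary y \<and> R_connected D region x y
      \<and> (\<exists>F. F face_of C \<and> aff_dim F = 2 \<and> x \<in> F \<and> y \<in> F)
      \<and> (x \<noteq> y \<longrightarrow> \<not> conic hull {y} face_of C))"

text \<open>Here the crossing point is \<open>x\<close> itself.\<close>
lemma reaches_crossing_if_plane_splits:
  assumes AD: "garc p q \<in> D" and pq: "arc_ends p q"
    and x: "x \<in> arc_interior (garc p q)" "x \<in> region_boundary"
    and b: "b \<in> C" "(p \<times> q) \<bullet> b = 0" "x \<times> b \<noteq> 0"
    and q: "q = \<gamma> *\<^sub>R x + \<delta> *\<^sub>R b" "\<gamma> > 0" "\<delta> > 0"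
    and c: "c1 \<in> C" "c2 \<in> C" "(p \<times> q) \<bullet> c1 > 0" "(p \<times> q) \<bullet> c2 < 0"
  shows "reaches_crossing x"
proof -
  define N where "N = p \<times> q"
  have N: "N \<noteq> 0" using arc_ends_cross_neq_0[OF pq] by (simp add: N_def)
  have xN: "norm x = 1" "N \<bullet> x = 0" "det3 x q N > 0"
    using mem_arc_interior_iff[OF pq] x(1) by (auto simp: N_def)
  have xC: "x \<in> C" using x(2) region_boundary_subset by (auto simp: region_def)
  have "(1 + \<gamma>) *\<^sub>R x + \<delta> *\<^sub>R b \<in> interior C"
    using interior_if_plane_splits[OF N xC b(1) xN(2) _ b(3) c(1,2)] b(2) c(3,4) q(2,3)
    by (simp add: N_def)
  moreover have "(1 + \<gamma>) *\<^sub>R x + \<delta> *\<^sub>R b = x + q" by (simp add: q(1) algebra_simps)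
  ultimately have "x + q \<in> interior C" by simp
  moreover have "N \<bullet> (x + q) = 0" "det3 x (x + q) N > 0"
    using xN pq by (simp_all add: inner_add_right det3_linear det3_self N_def cross_orthogonal)
  ultimately have "crosses_at (garc p q) region_boundary x"
    using crosses_at_region_boundary[OF pq x] by (simp add: N_def)
  moreover have "R_connected D region x x"
    unfolding R_connected_def using x AD region_boundary_subset
    by (intro exI[of _ "\<lambda>_. x"]) (auto simp: path_def path_image_def pathstart_def pathfinish_def arc_interior_def)
  moreover obtain F where "F face_of C" "aff_dim F = 2" "x \<in> F"
  proof (rule two_dim_face_through[OF polyhedral xC region_boundary_not_interior[OF x(2)] b(1) c(1)])
    obtain k where "N = k *\<^sub>R (x \<times> b)"
      using orthogonal_eq_multiple_cross[OF b(3)] xN(2) b(2) by (metis N_def inner_commute)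
    then show "det3 x b c1 \<noteq> 0" using c(3) by (auto simp: N_def det3_def)
  qed
  ultimately show ?thesis unfolding reaches_crossing_def using AD by blast
qed

lemma blocking_arc_off_great_circle:
  assumes "garc p q \<in> D" "arc_ends p q"
    and "garc p' q' \<in> D" "arc_ends p' q'" "q \<in> arc_interior (garc p' q')"
  shows "(p \<times> q) \<bullet> p' \<noteq> 0 \<or> (p \<times> q) \<bullet> q' \<noteq> 0"
proof (rule ccontr)
  assume "\<not> ((p \<times> q) \<bullet> p' \<noteq> 0 \<or> (p \<times> q) \<bullet> q' \<noteq> 0)"
  then obtain z where "z \<in> arc_interior (garc p q)" "z \<in> arc_interior (garc p' q')"
    using arc_interiors_meet_if_coplanar[OF assms(2,4,5)] by auto
  then have "garc p q = garc p' q'"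
    using spherical_diagram_interior_disjoint[OF diagram assms(1,3)] by blast
  then show False using assms(5) arc_interior_garc[OF assms(2)] by auto
qed

text \<open>The interior point needed for the crossing at \<open>q\<close> is found near \<open>q\<close> on the blocking
  arc; it is interior because it is a positive combination of \<open>x\<close>, \<open>b\<close> and the pole \<open>b'\<close>
  of the blocking arc, which lies strictly on the cone side of the supporting plane.\<close>
lemma crosses_at_blocking_arc:
  assumes x: "x \<in> C" and b: "b \<in> C" "x \<times> b \<noteq> 0" and q: "q = \<gamma> *\<^sub>R x + \<delta> *\<^sub>R b" "\<gamma> > 0" "\<delta> > 0"
    and M: "M \<noteq> 0" "\<And>c. c \<in> C \<Longrightarrow> M \<bullet> c \<ge> 0" "M \<bullet> x = 0" "M \<bullet> b = 0"
    and B: "garc p' q' \<in> D" "arc_ends p' q'" "q \<in> arc_interior (garc p' q')" and "M \<bullet> q' > 0"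
  shows "crosses_at (garc p' q') region_boundary q"
proof -
  define N where "N = p' \<times> q'"
  have N: "N \<noteq> 0" using arc_ends_cross_neq_0[OF B(2)] by (simp add: N_def)
  obtain b' where b': "b' \<in> C" "norm b' = 1" "b' \<notin> garc p' q'" "- b' \<notin> garc p' q'" "N \<bullet> b' = 0"
    using pole_of_garc[OF B(1,2)] by (auto simp: N_def)
  have qN: "norm q = 1" "N \<bullet> q = 0" "det3 q q' N > 0" "N \<bullet> q' = 0"
    using mem_arc_interior_iff[OF B(2)] B(3) by (auto simp: N_def cross_orthogonal)
  have "q \<in> garc p' q'" using B(3) by (auto simp: arc_interior_def)
  then have "q \<times> b' \<noteq> 0" by (intro cross_neq_0_if_unit) (use qN b' in auto)
  then have dqb': "det3 q b' N \<noteq> 0" using det3_neq_0_if_normal[OF N] qN b' by blast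
  define \<rho> where "\<rho> = det3 q' b' N / det3 q b' N"
  define \<tau> where "\<tau> = det3 q q' N / det3 q b' N"
  have "det3 q b' q' = 0"
    by (rule det3_eq_0_if_orthogonal[OF N]) (use qN b' in \<open>simp_all add: inner_commute\<close>)
  then have q': "q' = \<rho> *\<^sub>R q + \<tau> *\<^sub>R b'"
    unfolding \<rho>_def \<tau>_def by (rule coplanar_decomp) (fact dqb')
  have "M \<bullet> q = 0" using q(1) M(3,4) by (simp add: inner_add_right)
  then have "M \<bullet> q' = \<tau> * (M \<bullet> b')" by (simp add: q' inner_add_right)
  moreover have "M \<bullet> b' \<ge> 0" using M(2) b'(1) .
  ultimately have Mb': "M \<bullet> b' > 0" and \<tau>: "\<tau> > 0"
    using \<open>M \<bullet> q' > 0\<close> by (auto simp: zero_less_mult_iff)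
  obtain t where t: "0 < t" "t < 1" "(1 - t) * 1 + t * \<rho> > 0"
    using eventually_happens'[OF trivial_limit_at_right_real eventually_weight_pos[of 1 \<rho>]] by auto
  define z0 where "z0 = (1 - t) *\<^sub>R q + t *\<^sub>R q'"
  have "z0 = (((1 - t) + t * \<rho>) * \<gamma>) *\<^sub>R x + (((1 - t) + t * \<rho>) * \<delta>) *\<^sub>R b + (t * \<tau>) *\<^sub>R b'"
    by (simp add: z0_def q' q(1) algebra_simps)
  also have "\<dots> \<in> interior C"
    using interior_if_off_supporting_plane[OF x b(1) b'(1) b(2) M(3,4)] Mb' t q(2,3) \<tau> by simp
  finally have "z0 \<in> interior C" .
  moreover have "q \<in> region_boundary"
  proof (rule region_boundary_if_supported[OF _ M(1) \<open>M \<bullet> q = 0\<close> M(2)])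
    show "q \<in> region" using comb_mem[OF x b(1)] q qN(1) by (simp add: region_def)
  qed
  moreover have "N \<bullet> z0 = 0" "det3 q z0 N > 0"
    using qN t by (simp_all add: z0_def inner_add_right det3_linear det3_self)
  ultimately show ?thesis
    using crosses_at_region_boundary[OF B(2,3)] by (simp add: N_def)
qed

text \<open>Here the crossing point is the end \<open>q\<close>, on the arc blocking \<open>q\<close>, whose far end lies on
  the cone side of the supporting plane.\<close>
lemma reaches_crossing_if_plane_supports:
  assumes AD: "garc p q \<in> D" and pq: "arc_ends p q" and x: "x \<in> arc_interior (garc p q)" "x \<in> C"
    and b: "b \<in> C" "(p \<times> q) \<bullet> b = 0" "x \<times> b \<noteq> 0"
    and q: "q = \<gamma> *\<^sub>R x + \<delta> *\<^sub>R b" "\<gamma> > 0" "\<delta> > 0"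
    and M: "M = p \<times> q \<or> M = - (p \<times> q)" "\<And>c. c \<in> C \<Longrightarrow> M \<bullet> c \<ge> 0"
  shows "reaches_crossing x"
proof -
  have M0: "M \<noteq> 0" using M(1) arc_ends_cross_neq_0[OF pq] by auto
  have xN: "(p \<times> q) \<bullet> x = 0" "det3 x q (p \<times> q) > 0"
    using mem_arc_interior_iff[OF pq] x(1) by auto
  have Mxbq: "M \<bullet> x = 0" "M \<bullet> b = 0" "M \<bullet> q = 0"
    using M(1) xN(1) b(2) by (auto simp: cross_orthogonal)
  obtain B' where B': "B' \<in> D" "q \<in> arc_interior B'"
    using spherical_diagram_blocked[OF diagram AD] arc_endpoint_garc_iff[OF pq] by blast
  then obtain p' q' where pq': "arc_ends p' q'" "B' = garc p' q'"
    using spherical_diagram_arc[OF diagram] by blast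
  have q': "q \<in> arc_interior (garc p' q')" using B' pq' by simp
  have "M \<bullet> p' \<noteq> 0 \<or> M \<bullet> q' \<noteq> 0"
    using blocking_arc_off_great_circle[OF AD pq _ pq'(1) q'] B'(1) pq'(2) M(1) by auto
  then have "M \<bullet> p' > 0 \<or> M \<bullet> q' > 0"
    using arc_ends_opposite_sides[OF pq'(1) q' Mxbq(3)] by auto
  then obtain p'' q'' where pq'': "arc_ends p'' q''" "garc p'' q'' = B'" "M \<bullet> q'' > 0"
    using pq' arc_ends_commute garc_commute by metis
  have "crosses_at B' region_boundary q"
    using crosses_at_blocking_arc[OF x(2) b(1,3) q M0 M(2) Mxbq(1,2) _ pq''(1) _ pq''(3)] pq''(2) B'
    by simp
  moreover have "R_connected D region x q"
  proof -
    have "x \<noteq> - q" using xN(2) by (auto simp: det3_self det3_linear)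
    moreover have "x \<in> garc p q" "q \<in> garc p q" "q \<in> C"
      using x(1) ends_mem_garc[OF pq] q comb_mem[OF x(2) b(1)] by (auto simp: arc_interior_def)
    ultimately obtain g where "path g" "path_image g \<subseteq> garc p q \<inter> region" "pathstart g = x" "pathfinish g = q"
      using path_in_region_along_arc[OF pq _ x(2)] by blast
    then show ?thesis unfolding R_connected_def using AD by blast
  qed
  moreover have "(C \<inter> {z. M \<bullet> z = 0}) face_of C" "aff_dim (C \<inter> {z. M \<bullet> z = 0}) = 2"
    using face_of_supporting_plane[OF M0 M(2) x(2) b(1) Mxbq(1,2) b(3)] by auto
  moreover have "x \<in> C \<inter> {z. M \<bullet> z = 0}" "q \<in> C \<inter> {z. M \<bullet> z = 0}"
    using x(2) Mxbq comb_mem[OF x(2) b(1)] q by auto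
  moreover have "\<not> conic hull {q} face_of C" using ray_between_not_face[OF x(2) b(1,3) q(2,3)] q(1) by simp
  ultimately show ?thesis unfolding reaches_crossing_def using B'(1) by blast
qed

lemma reaches_crossing_oriented:
  assumes AD: "garc p q \<in> D" and pq: "arc_ends p q"
    and x: "x \<in> arc_interior (garc p q)" "x \<in> region_boundary"
    and b: "b \<in> C" "norm b = 1" "b \<notin> garc p q" "- b \<notin> garc p q" "(p \<times> q) \<bullet> b = 0"
    and pos: "det3 x b (p \<times> q) > 0"
  shows "reaches_crossing x"
proof -
  obtain \<gamma> \<delta> where q: "\<gamma> > 0" "\<delta> > 0" "q = \<gamma> *\<^sub>R x + \<delta> *\<^sub>R b"
    using garc_end_between_point_and_pole[OF pq x(1) b(2-5) pos] by blast
  have xC: "x \<in> C" using x(2) region_boundary_subset by (auto simp: region_def)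
  have "x \<times> b \<noteq> 0" using pos by (auto simp: det3_def)
  show ?thesis
  proof (cases "\<exists>c1\<in>C. \<exists>c2\<in>C. (p \<times> q) \<bullet> c1 > 0 \<and> (p \<times> q) \<bullet> c2 < 0")
    case True
    then show ?thesis
      using reaches_crossing_if_plane_splits[OF AD pq x b(1,5) \<open>x \<times> b \<noteq> 0\<close> q(3,1,2)] by blast
  next
    case False
    then obtain M where "M = p \<times> q \<or> M = - (p \<times> q)" "\<And>c. c \<in> C \<Longrightarrow> M \<bullet> c \<ge> 0"
      by (metis inner_minus_left neg_0_le_iff_le not_le)
    then show ?thesis
      using reaches_crossing_if_plane_supports[OF AD pq x(1) xC b(1,5) \<open>x \<times> b \<noteq> 0\<close> q(3,1,2)] by blast
  qed
qed

lemma reaches_crossing_arc_interior: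
  assumes "B \<in> D" "x \<in> arc_interior B" "x \<in> region_boundary"
  shows "reaches_crossing x"
proof -
  obtain p q where pq: "arc_ends p q" "B = garc p q"
    using spherical_diagram_arc[OF diagram assms(1)] by blast
  obtain b where b: "b \<in> C" "norm b = 1" "b \<notin> garc p q" "- b \<notin> garc p q" "(p \<times> q) \<bullet> b = 0"
    using pole_of_garc assms(1) pq by blast
  have x: "x \<in> arc_interior (garc p q)" using assms(2) pq(2) by simp
  have xN: "norm x = 1" "(p \<times> q) \<bullet> x = 0" "x \<in> garc p q"
    using mem_arc_interior_iff[OF pq(1)] x by (auto simp: arc_interior_def)
  have "x \<times> b \<noteq> 0" by (rule cross_neq_0_if_unit) (use xN b in auto)
  then have "det3 x b (p \<times> q) \<noteq> 0"
    using det3_neq_0_if_normal[OF arc_ends_cross_neq_0[OF pq(1)]] xN(2) b(5) by blast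
  then consider "det3 x b (p \<times> q) > 0" | "det3 x b (q \<times> p) > 0"
    by (metis cross_skew det3_linear(12) linorder_neqE_linordered_idom neg_0_less_iff_less)
  then show ?thesis
  proof cases
    case 1
    then show ?thesis using reaches_crossing_oriented[OF _ pq(1) x assms(3) b] assms(1) pq(2) by blast
  next
    case 2
    have "(q \<times> p) \<bullet> b = 0" using b(5) by (metis cross_skew inner_minus_left neg_equal_0_iff_equal)
    then show ?thesis
      using reaches_crossing_oriented[OF _ arc_ends_commute[OF pq(1)] _ assms(3) b(1,2) _ _ _ 2]
        assms(1,2) pq(2) b(3,4) garc_commute[of p q] by auto
  qed
qed

lemma reaches_crossing:
  assumes "A \<in> D" "x \<in> A" "x \<in> region_boundary"
  shows "reaches_crossing x"
proof (cases "x \<in> arc_interior A")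
  case True
  then show ?thesis using reaches_crossing_arc_interior assms by blast
next
  case False
  then have "arc_endpoint A x" using assms(2) by (simp add: arc_interior_def)
  then obtain B where "B \<in> D" "x \<in> arc_interior B"
    using spherical_diagram_blocked[OF diagram assms(1)] by blast
  then show ?thesis using reaches_crossing_arc_interior assms(3) by blast
qed

lemma conic_hull_region_eq: "conic hull region = C"
proof -
  obtain B where "B \<in> D" using diagram by (auto simp: spherical_diagram_def)
  then obtain b where "b \<in> C" "norm b = 1" using pole_in_cone by blast
  then show ?thesis by (intro conic_hull_region[of b]) auto
qed

lemma crossing_on_common_edge:
  assumes "A \<in> D" "x \<in> A" "x \<in> region_boundary"
  shows "\<exists>B\<in>D. \<exists>y. crosses_at B region_boundary y \<and> R_connected D region x y
    \<and> (\<exists>E. sph_edge region E \<and> x \<in> E \<and> y \<in> E) \<and> (x \<noteq> y \<longrightarrow> \<not> sph_vertex region y)"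
proof -
  obtain B y F where B: "B \<in> D" "crosses_at B region_boundary y" "R_connected D region x y"
    and F: "F face_of C" "aff_dim F = 2" "x \<in> F" "y \<in> F"
    and vertex: "x \<noteq> y \<longrightarrow> \<not> conic hull {y} face_of C"
    using reaches_crossing[OF assms] unfolding reaches_crossing_def by blast
  have "y \<in> region_boundary" using B(2) by (simp add: crosses_at_def)
  then have "norm x = 1" "norm y = 1"
    using assms(3) region_boundary_subset by (auto simp: region_def)
  then have "sph_edge region (F \<inter> sphere 0 1)" "x \<in> F \<inter> sphere 0 1" "y \<in> F \<inter> sphere 0 1"
    using F by (auto simp: sph_edge_def conic_hull_region_eq)
  moreover have "x \<noteq> y \<longrightarrow> \<not> sph_vertex region y"
    using vertex by (simp add: sph_vertex_def conic_hull_region_eq)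
  ultimately show ?thesis using B by blast
qed

end

section \<open>Attractor hulls\<close>

text \<open>Choosing from each point of the attractor the pole among it and its antipode is injective,
  as the attractor contains no antipodal pair; counting makes it onto the poles.\<close>
lemma attractor_pole_or_antipole:
  assumes att: "attractor P Att" and P: "finite P" "\<forall>p\<in>P. - p \<notin> P" and "p \<in> P"
  shows "p \<in> Att \<or> - p \<in> Att"
proof -
  define g where "g a = (if a \<in> P then a else - a)" for a :: pt
  have Att: "finite Att" "Att \<subseteq> P \<union> uminus ` P" "card Att = card P" "\<forall>a\<in>Att. - a \<notin> Att"
    using att unfolding attractor_def by auto
  have "g ` Att \<subseteq> P" using Att(2) by (auto simp: g_def)
  moreover have "inj_on g Att"
  proof (rule inj_onI)
    fix a a' assume a: "a \<in> Att" "a' \<in> Att" "g a = g a'"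
    show "a = a'"
    proof (cases "a \<in> P"; cases "a' \<in> P")
      assume "a \<in> P" "a' \<notin> P"
      then have "a = - a'" using a(3) by (simp add: g_def)
      then show ?thesis using a(1,2) Att(4) by auto
    next
      assume "a \<notin> P" "a' \<in> P"
      then have "a' = - a" using a(3) by (simp add: g_def)
      then show ?thesis using a(1,2) Att(4) by auto
    qed (use a(3) in \<open>simp_all add: g_def\<close>)
  qed
  then have "card (g ` Att) = card P" by (simp add: card_image Att(3))
  ultimately have "g ` Att = P" using card_subset_eq[OF P(1)] by blast
  then obtain a where "a \<in> Att" "p = g a" using \<open>p \<in> P\<close> by auto
  then show ?thesis by (cases "a \<in> P") (auto simp: g_def)
qed

lemma diagram_in_attractor_cone:
  assumes D: "spherical_diagram D" and orient: "k_orientation D k P f" and att: "attractor P Att"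
  shows "diagram_in_cone (conic hull (convex hull Att)) D"
proof -
  let ?C = "conic hull (convex hull Att)"
  have P: "finite P" "P \<subseteq> sphere 0 1" "\<forall>p\<in>P. - p \<notin> P"
    using orient unfolding k_orientation_def by auto
  have f: "f B \<in> P" "f B \<notin> B" "- f B \<notin> B" "\<exists>n. n \<noteq> 0 \<and> n \<bullet> f B = 0 \<and> (\<forall>z\<in>B. n \<bullet> z = 0)"
    if "B \<in> D" for B
    using orient that unfolding k_orientation_def by auto
  have Att: "finite Att" "Att \<subseteq> P \<union> uminus ` P" using att unfolding attractor_def by auto
  have "Att \<subseteq> ?C" by (meson hull_subset subset_trans)
  have pole: "\<exists>b\<in>?C. norm b = 1 \<and> b \<notin> B \<and> - b \<notin> B \<and> (\<exists>n. n \<noteq> 0 \<and> n \<bullet> b = 0 \<and> (\<forall>z\<in>B. n \<bullet> z = 0))"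
    if B: "B \<in> D" for B
  proof -
    obtain b where "b \<in> Att" "b = f B \<or> b = - f B"
      using attractor_pole_or_antipole[OF att P(1,3) f(1)[OF B]] by blast
    moreover have "norm (f B) = 1" using f(1)[OF B] P(2) by auto
    ultimately show ?thesis
      using \<open>Att \<subseteq> ?C\<close> f(2-4)[OF B] by (intro bexI[of _ b]) auto
  qed
  obtain B where "B \<in> D" using D by (auto simp: spherical_diagram_def)
  then have "?C \<noteq> {}" using pole by blast
  have "polyhedron ?C"
    by (rule polyhedron_conic_hull_polytope) (use Att(1) in \<open>auto simp: polytope_def\<close>)
  show ?thesis
  proof unfold_locales
    show "convex_cone ?C"
      using \<open>?C \<noteq> {}\<close> by (simp add: convex_cone_def convex_conic_hull conic_conic_hull)
    show "closed ?C" using \<open>polyhedron ?C\<close> polyhedron_imp_closed by blast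
  qed (use \<open>polyhedron ?C\<close> D pole in auto)
qed

theorem mainTheorem15:
  fixes D :: "pt set set" and k :: nat and P :: "pt set" and f :: "pt set \<Rightarrow> pt"
    and Att :: "pt set" and A :: "pt set" and x :: pt
  assumes "spherical_diagram D"
    and "k_orientation D k P f"
    and "attractor P Att"
    and "A \<in> D" and "x \<in> A" and "x \<in> sph_boundary (attractor_hull Att)"
  shows "\<exists>B\<in>D. \<exists>y. crosses_at B (sph_boundary (attractor_hull Att)) y
           \<and> R_connected D (attractor_hull Att) x y
           \<and> (\<exists>E. sph_edge (attractor_hull Att) E \<and> x \<in> E \<and> y \<in> E)
           \<and> (x \<noteq> y \<longrightarrow> \<not> sph_vertex (attractor_hull Att) y)"
proof (cases "in_open_hemisphere Att")
  case False
  then have "attractor_hull Att = topspace (top_of_set (sphere (0::pt) 1))"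
    by (simp add: attractor_hull_def)
  then have "sph_boundary (attractor_hull Att) = {}"
    unfolding sph_boundary_def by (metis frontier_of_topspace)
  with assms(6) show ?thesis by simp
next
  case True
  interpret diagram_in_cone "conic hull (convex hull Att)" D
    using diagram_in_attractor_cone[OF assms(1-3)] .
  have "attractor_hull Att = region"
    using True by (simp add: attractor_hull_def spherical_hull_def region_def)
  moreover have "sph_boundary region = region_boundary"
    by (simp add: sph_boundary_def region_boundary_def)
  ultimately show ?thesis using crossing_on_common_edge[OF assms(4,5)] assms(6) by simp
qed

end
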